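(* Let $C\ge 2$ and $N\ge 1$ be integers and let $\boldsymbol{h}_{i,c}\in\mathbb{R}^p$ ($1\le i\le N$, $1\le c\le C$) be fixed (not trained) feature vectors, $\boldsymbol{h}_{i,c}$ being the $i$-th example of class $c$. Define the class-means $\boldsymbol{\mu}_c=\frac1N\sum_{i}\boldsymbol{h}_{i,c}$, the global mean $\boldsymbol{\mu}_G=\frac{1}{NC}\sum_{i,c}\boldsymbol{h}_{i,c}$, the total covariance $\boldsymbol{\Sigma}_T=\frac{1}{NC}\sum_{i,c}(\boldsymbol{h}_{i,c}-\boldsymbol{\mu}_G)(\boldsymbol{h}_{i,c}-\boldsymbol{\mu}_G)^\top$, the within-class covariance $\boldsymbol{\Sigma}_W=\frac{1}{NC}\sum_{i,c}(\boldsymbol{h}_{i,c}-\boldsymbol{\mu}_c)(\boldsymbol{h}_{i,c}-\boldsymbol{\mu}_c)^\top$, and the matrix $\dot{\boldsymbol{M}}=[\boldsymbol{\mu}_1-\boldsymbol{\mu}_G,\dots,\boldsymbol{\mu}_C-\boldsymbol{\mu}_G]\in\mathbb{R}^{p\times C}$. Consider the (Webb–Lowe) linear classifier with weights $\boldsymbol{W}\in\mathbb{R}^{C\times p}$ (rows $\boldsymbol{w}_c^\top$) and biases $\boldsymbol{b}=(b_c)\in\mathbb{R}^C$ given by $$\boldsymbol{W}=\tfrac1C\dot{\boldsymbol{M}}^\top\boldsymbol{\Sigma}_T^\dagger,\qquad \boldsymbol{b}=\tfrac1C\mathbf{1}_C-\tfrac1C\dot{\boldsymbol{M}}^\top\boldsymbol{\Sigma}_T^\dagger\boldsymbol{\mu}_G,$$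 where $\dagger$ is the Moore–Penrose pseudoinverse and $\mathbf{1}_C$ the all-ones vector. Assume (i) $\boldsymbol{\Sigma}_W=\mathbf{0}$, and (ii) $\boldsymbol{\mu}_c\neq\boldsymbol{\mu}_G$ for all $c$, $\|\boldsymbol{\mu}_c-\boldsymbol{\mu}_G\|_2=\|\boldsymbol{\mu}_{c'}-\boldsymbol{\mu}_G\|_2$ for all $c,c'$, and, with $\tilde{\boldsymbol{\mu}}_c=(\boldsymbol{\mu}_c-\boldsymbol{\mu}_G)/\|\boldsymbol{\mu}_c-\boldsymbol{\mu}_G\|_2$, $\langle\tilde{\boldsymbol{\mu}}_c,\tilde{\boldsymbol{\mu}}_{c'}\rangle=\frac{C}{C-1}\delta_{c,c'}-\frac{1}{C-1}$ for all $c,c'$. Then (a) $\dfrac{\boldsymbol{W}^\top}{\|\boldsymbol{W}\|_F}=\dfrac{\dot{\boldsymbol{M}}}{\|\dot{\boldsymbol{M}}\|_F}$, and (b) for every $\boldsymbol{h}\in\mathbb{R}^p$, $\arg\max_{c'}\left(\langle\boldsymbol{w}_{c'},\boldsymbol{h}\rangle+b_{c'}\right)=\arg\min_{c'}\|\boldsymbol{h}-\boldsymbol{\mu}_{c'}\|_2$.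
   Context: $\delta_{c,c'}$ is the Kronecker delta and $\|\cdot\|_F$ the Frobenius norm. The classifier above is (by a result of Webb and Lowe) the optimal linear classifier under mean-squared-error loss when the features are fixed; in the claim it is simply the classifier defined by the displayed formulas. The predicted label of a feature $\boldsymbol{h}$ is the index maximizing $\langle\boldsymbol{w}_c,\boldsymbol{h}\rangle+b_c$. *)

theory Defs
  imports "HOL-Analysis.Analysis"
begin

text \<open>Features h i c in R^p: i ranges over the finite type 'n (N = CARD('n) examples),
  c ranges over the finite type 'c (C = CARD('c) classes), p = CARD('p).\<close>

definition outer :: "real^'p \<Rightarrow> real^'p \<Rightarrow> real^'p^'p" where
  "outer u v = (\<chi> i j. u $ i * v $ j)"

definition frob_norm :: "real^'a^'b \<Rightarrow> real" where
  "frob_norm A = sqrt (\<Sum>i\<in>UNIV. \<Sum>j\<in>UNIV. (A $ i $ j)^2)"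

definition pinv :: "real^'n^'m \<Rightarrow> real^'m^'n" where
  "pinv A = (THE X. A ** X ** A = A \<and> X ** A ** X = X \<and>
                    transpose (A ** X) = A ** X \<and> transpose (X ** A) = X ** A)"

definition class_mean :: "('n::finite \<Rightarrow> 'c \<Rightarrow> real^'p) \<Rightarrow> 'c \<Rightarrow> real^'p" where
  "class_mean h c = (1 / real CARD('n)) *\<^sub>R (\<Sum>i\<in>UNIV. h i c)"

definition global_mean :: "('n::finite \<Rightarrow> 'c::finite \<Rightarrow> real^'p) \<Rightarrow> real^'p" where
  "global_mean h = (1 / (real CARD('n) * real CARD('c))) *\<^sub>R (\<Sum>i\<in>UNIV. \<Sum>c\<in>UNIV. h i c)"

definition total_cov :: "('n::finite \<Rightarrow> 'c::finite \<Rightarrow> real^'p) \<Rightarrow> real^'p^'p" where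
  "total_cov h = (1 / (real CARD('n) * real CARD('c))) *\<^sub>R
     (\<Sum>i\<in>UNIV. \<Sum>c\<in>UNIV. outer (h i c - global_mean h) (h i c - global_mean h))"

definition within_cov :: "('n::finite \<Rightarrow> 'c::finite \<Rightarrow> real^'p) \<Rightarrow> real^'p^'p" where
  "within_cov h = (1 / (real CARD('n) * real CARD('c))) *\<^sub>R
     (\<Sum>i\<in>UNIV. \<Sum>c\<in>UNIV. outer (h i c - class_mean h c) (h i c - class_mean h c))"

definition Mdot :: "('n::finite \<Rightarrow> 'c::finite \<Rightarrow> real^'p) \<Rightarrow> real^'c^'p" where
  "Mdot h = (\<chi> k c. (class_mean h c - global_mean h) $ k)"

definition WL_W :: "('n::finite \<Rightarrow> 'c::finite \<Rightarrow> real^'p) \<Rightarrow> real^'p^'c" where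
  "WL_W h = (1 / real CARD('c)) *\<^sub>R (transpose (Mdot h) ** pinv (total_cov h))"

definition WL_b :: "('n::finite \<Rightarrow> 'c::finite \<Rightarrow> real^'p) \<Rightarrow> real^'c" where
  "WL_b h = (1 / real CARD('c)) *\<^sub>R (\<chi> c. 1)
          - (1 / real CARD('c)) *\<^sub>R ((transpose (Mdot h) ** pinv (total_cov h)) *v global_mean h)"

end

theory Submission
  imports Defs
begin

(* Collapse (Sigma_W = 0) makes every feature equal to its class mean, so Sigma_T = (1/C) M M^T,
   where M is the matrix of centred class means. The simplex condition says M^T M = alpha I - gamma 1 1^T,
   and the centred means sum to zero, so M^T M M^T = alpha M^T. Thus M M^T is a multiple of an
   orthogonal projection, its pseudoinverse is explicit, and W = M^T / alpha. The score of class c is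
   then an increasing affine function of <mu_c - mu_G, h - mu_G>; as all centred means have the same
   norm, maximising it is the same as minimising ||h - mu_c||. *)

definition is_pinv :: "real^'n^'m \<Rightarrow> real^'m^'n \<Rightarrow> bool" where
  "is_pinv A X \<longleftrightarrow> A ** X ** A = A \<and> X ** A ** X = X \<and>
     transpose (A ** X) = A ** X \<and> transpose (X ** A) = X ** A"

lemma is_pinv_unique:
  assumes X: "is_pinv A X" and Y: "is_pinv A Y"
  shows "X = Y"
proof -
  have AXA: "A ** X ** A = A" and XAX: "X ** A ** X = X"
    and AX: "transpose (A ** X) = A ** X" and XA: "transpose (X ** A) = X ** A"
    using X unfolding is_pinv_def by auto
  have AYA: "A ** Y ** A = A" and YAY: "Y ** A ** Y = Y"
    and AY: "transpose (A ** Y) = A ** Y" and YA: "transpose (Y ** A) = Y ** A"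
    using Y unfolding is_pinv_def by auto
  have "X = X ** transpose (A ** X)"
    using XAX AX by (simp add: matrix_mul_assoc)
  also have "\<dots> = X ** transpose (A ** Y ** A ** X)"
    using AYA by simp
  also have "\<dots> = X ** transpose (A ** X) ** transpose (A ** Y)"
    by (simp add: matrix_transpose_mul matrix_mul_assoc)
  also have "\<dots> = X ** A ** Y"
    using XAX AX AY by (simp add: matrix_mul_assoc)
  finally have X_eq: "X = X ** A ** Y" .
  have "Y = transpose (Y ** A) ** Y"
    using YAY YA by (simp add: matrix_mul_assoc)
  also have "\<dots> = transpose (X ** A) ** transpose (Y ** A) ** Y"
    using AXA by (metis matrix_mul_assoc matrix_transpose_mul)
  also have "\<dots> = X ** A ** Y"
    using YAY XA YA by (metis matrix_mul_assoc)
  finally show ?thesis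
    using X_eq by simp
qed

lemma pinv_eqI: "is_pinv A X \<Longrightarrow> pinv A = X"
  unfolding pinv_def is_pinv_def[symmetric] using is_pinv_unique by blast

lemma pinv_symmetric_quasi_idempotent:
  fixes B :: "real^'n^'n"
  assumes "transpose B = B" and "B ** B = \<beta> *\<^sub>R B" and "\<beta> \<noteq> 0"
  shows "pinv B = (1 / \<beta>\<^sup>2) *\<^sub>R B"
proof (rule pinv_eqI)
  have "B ** B ** B = \<beta>\<^sup>2 *\<^sub>R B"
    using assms(2) by (simp add: matrix_scalar_ac scalar_matrix_assoc[symmetric] power2_eq_square)
  then show "is_pinv B ((1 / \<beta>\<^sup>2) *\<^sub>R B)"
    unfolding is_pinv_def using assms
    by (simp add: matrix_scalar_ac scalar_matrix_assoc[symmetric] transpose_scalar power2_eq_square)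
qed

lemma transpose_mul_pinv_scaled_gram:
  fixes M :: "real^'c^'p"
  assumes M: "transpose M ** M ** transpose M = \<alpha> *\<^sub>R transpose M" and "\<alpha> \<noteq> 0" and "k \<noteq> 0"
  shows "transpose M ** pinv (k *\<^sub>R (M ** transpose M)) = (1 / (k * \<alpha>)) *\<^sub>R transpose M"
proof -
  let ?B = "k *\<^sub>R (M ** transpose M)"
  have "?B ** ?B = (k * k) *\<^sub>R (M ** (transpose M ** M ** transpose M))"
    by (simp add: matrix_scalar_ac scalar_matrix_assoc[symmetric] matrix_mul_assoc)
  also have "\<dots> = (k * \<alpha>) *\<^sub>R ?B"
    using M by (simp add: matrix_scalar_ac scalar_matrix_assoc[symmetric])
  finally have "pinv ?B = (1 / (k * \<alpha>)\<^sup>2) *\<^sub>R ?B"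
    using assms by (intro pinv_symmetric_quasi_idempotent) (simp_all add: transpose_scalar matrix_transpose_mul)
  then have "transpose M ** pinv ?B = (k / (k * \<alpha>)\<^sup>2) *\<^sub>R (transpose M ** M ** transpose M)"
    by (simp add: matrix_scalar_ac scalar_matrix_assoc[symmetric] matrix_mul_assoc)
  then show ?thesis
    using assms by (simp add: power2_eq_square)
qed

lemma transpose_mul_mul_transpose_of_simplex:
  fixes M :: "real^'c^'p"
  assumes gram: "\<And>c c'. column c M \<bullet> column c' M = (if c = c' then \<alpha> else 0) - \<gamma>"
    and centered: "(\<Sum>c\<in>UNIV. column c M) = 0"
  shows "transpose M ** M ** transpose M = \<alpha> *\<^sub>R transpose M"
proof -
  have row_sum: "(\<Sum>c\<in>UNIV. M $ k $ c) = 0" for k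
    using arg_cong[OF centered, of "\<lambda>v. v $ k"] by (simp add: sum_component column_def)
  have "(\<Sum>c'\<in>UNIV. ((if c = c' then \<alpha> else 0) - \<gamma>) * M $ k $ c') = \<alpha> * M $ k $ c" for c k
    using row_sum[of k]
    by (simp add: left_diff_distrib sum_subtractf sum_distrib_left[symmetric]
        if_distrib[where f = "\<lambda>x. x * _"] cong: if_cong)
  then show ?thesis
    unfolding matrix_mult_transpose_dot_column gram
    by (simp add: matrix_matrix_mult_def transpose_def vec_eq_iff)
qed

lemma frob_norm_scaleR: "frob_norm (k *\<^sub>R A) = \<bar>k\<bar> * frob_norm A"
  unfolding frob_norm_def
  by (simp add: power_mult_distrib sum_distrib_left[symmetric] real_sqrt_mult)

lemma frob_norm_transpose: "frob_norm (transpose A) = frob_norm A"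
  unfolding frob_norm_def transpose_def using sum.swap by force

lemma frob_normalize_scaleR:
  assumes "k > 0"
  shows "(1 / frob_norm (k *\<^sub>R A)) *\<^sub>R (k *\<^sub>R A) = (1 / frob_norm A) *\<^sub>R A"
  using assms by (cases "frob_norm A = 0") (simp_all add: frob_norm_scaleR)

lemma inner_eq_norm_mult_normalized_inner:
  fixes u v :: "'a::real_inner"
  shows "u \<bullet> v = norm u * norm v * (((1 / norm u) *\<^sub>R u) \<bullet> ((1 / norm v) *\<^sub>R v))"
  by (cases "u = 0 \<or> v = 0") auto

lemma inner_of_equinorm_simplex:
  fixes u :: "'c \<Rightarrow> 'a::real_inner"
  assumes norm_u: "\<And>c. norm (u c) = r"
    and simplex: "\<And>c c'. ((1 / norm (u c)) *\<^sub>R u c) \<bullet> ((1 / norm (u c')) *\<^sub>R u c')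
      = C / (C - 1) * (if c = c' then 1 else 0) - 1 / (C - 1)"
  shows "u c \<bullet> u c' = (if c = c' then r\<^sup>2 * C / (C - 1) else 0) - r\<^sup>2 / (C - 1)"
proof -
  have "u c \<bullet> u c' = r * r * (C / (C - 1) * (if c = c' then 1 else 0) - 1 / (C - 1))"
    using inner_eq_norm_mult_normalized_inner[of "u c" "u c'", unfolded simplex, unfolded norm_u] .
  then show ?thesis
    by (simp add: power2_eq_square right_diff_distrib)
qed

lemma norm_diff_le_iff_inner_le:
  fixes a b y :: "'a::real_inner"
  assumes "norm a = norm b"
  shows "norm (y - a) \<le> norm (y - b) \<longleftrightarrow> b \<bullet> y \<le> a \<bullet> y"
proof -
  have "a \<bullet> a = b \<bullet> b"
    using assms by (metis power2_norm_eq_inner)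
  then have "(norm (y - a))\<^sup>2 \<le> (norm (y - b))\<^sup>2 \<longleftrightarrow> b \<bullet> y \<le> a \<bullet> y"
    by (simp add: power2_norm_eq_inner inner_diff_left inner_diff_right inner_commute)
  then show ?thesis
    by (simp add: norm_le_square)
qed

lemma column_Mdot [simp]: "column c (Mdot h) = class_mean h c - global_mean h"
  by (simp add: column_def Mdot_def vec_eq_iff)

lemma global_mean_eq_mean_of_class_means:
  fixes h :: "'n::finite \<Rightarrow> 'c::finite \<Rightarrow> real^'p"
  shows "global_mean h = (1 / real CARD('c)) *\<^sub>R (\<Sum>c\<in>UNIV. class_mean h c)"
proof -
  have "(\<Sum>i\<in>UNIV. \<Sum>c\<in>UNIV. h i c) = (\<Sum>c\<in>UNIV. \<Sum>i\<in>UNIV. h i c)"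
    by (rule sum.swap)
  then show ?thesis
    unfolding global_mean_def class_mean_def by (simp add: scaleR_sum_right[symmetric] mult.commute)
qed

lemma sum_centered_class_means:
  fixes h :: "'n::finite \<Rightarrow> 'c::finite \<Rightarrow> real^'p"
  shows "(\<Sum>c\<in>UNIV. class_mean h c - global_mean h) = 0"
  by (simp add: sum_subtractf sum_constant_scaleR global_mean_eq_mean_of_class_means del: sum_constant)

lemma feature_eq_class_mean_of_within_cov_eq_0:
  fixes h :: "'n::finite \<Rightarrow> 'c::finite \<Rightarrow> real^'p"
  assumes "within_cov h = 0"
  shows "h i c = class_mean h c"
proof -
  let ?d = "\<lambda>i c k. ((h i c - class_mean h c) $ k)\<^sup>2"
  have "(\<Sum>i\<in>UNIV. \<Sum>c\<in>UNIV. ?d i c k) = 0" for k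
    using arg_cong[OF assms, of "\<lambda>S. S $ k $ k"]
    by (simp add: within_cov_def outer_def sum_component power2_eq_square)
  then have "?d i c k = 0" for k
    by (simp add: sum_nonneg sum_nonneg_eq_0_iff)
  then show ?thesis
    by (simp add: vec_eq_iff)
qed

lemma total_cov_of_collapse:
  fixes h :: "'n::finite \<Rightarrow> 'c::finite \<Rightarrow> real^'p"
  assumes collapse: "\<And>i c. h i c = class_mean h c"
  shows "total_cov h = (1 / real CARD('c)) *\<^sub>R (Mdot h ** transpose (Mdot h))"
proof -
  let ?m = "\<lambda>c. class_mean h c - global_mean h"
  have "(\<Sum>i\<in>UNIV. \<Sum>c\<in>UNIV. outer (h i c - global_mean h) (h i c - global_mean h))
      = real CARD('n) *\<^sub>R (\<Sum>c\<in>UNIV. outer (?m c) (?m c))"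
    by (subst (1 2) collapse) (simp add: sum_constant_scaleR del: sum_constant)
  moreover have "(\<Sum>c\<in>UNIV. outer (?m c) (?m c)) = Mdot h ** transpose (Mdot h)"
    by (simp add: vec_eq_iff outer_def sum_component matrix_matrix_mult_def transpose_def Mdot_def)
  ultimately show ?thesis
    by (simp add: total_cov_def)
qed

lemma transpose_Mdot_mul_pinv_total_cov:
  fixes h :: "'n::finite \<Rightarrow> 'c::finite \<Rightarrow> real^'p"
  assumes "within_cov h = 0"
    and frame: "transpose (Mdot h) ** Mdot h ** transpose (Mdot h) = \<alpha> *\<^sub>R transpose (Mdot h)"
    and "\<alpha> \<noteq> 0"
  shows "transpose (Mdot h) ** pinv (total_cov h) = (real CARD('c) / \<alpha>) *\<^sub>R transpose (Mdot h)"
  using transpose_mul_pinv_scaled_gram[OF frame \<open>\<alpha> \<noteq> 0\<close>, of "1 / real CARD('c)"]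
  by (simp add: total_cov_of_collapse feature_eq_class_mean_of_within_cov_eq_0[OF assms(1)])

lemma WL_W_of_collapse:
  fixes h :: "'n::finite \<Rightarrow> 'c::finite \<Rightarrow> real^'p"
  assumes "within_cov h = 0"
    and "transpose (Mdot h) ** Mdot h ** transpose (Mdot h) = \<alpha> *\<^sub>R transpose (Mdot h)"
    and "\<alpha> \<noteq> 0"
  shows "WL_W h = (1 / \<alpha>) *\<^sub>R transpose (Mdot h)"
  by (simp add: WL_W_def transpose_Mdot_mul_pinv_total_cov[OF assms])

lemma WL_score_of_collapse:
  fixes h :: "'n::finite \<Rightarrow> 'c::finite \<Rightarrow> real^'p"
  assumes "within_cov h = 0"
    and "transpose (Mdot h) ** Mdot h ** transpose (Mdot h) = \<alpha> *\<^sub>R transpose (Mdot h)"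
    and "\<alpha> \<noteq> 0"
  shows "(WL_W h $ c) \<bullet> x + WL_b h $ c
    = (1 / \<alpha>) * ((class_mean h c - global_mean h) \<bullet> (x - global_mean h)) + 1 / real CARD('c)"
proof -
  have row: "transpose (Mdot h) $ c = class_mean h c - global_mean h"
    using row_transpose[of c "Mdot h"] by (simp add: row_def vec_eq_iff)
  show ?thesis
    unfolding WL_b_def WL_W_of_collapse[OF assms] transpose_Mdot_mul_pinv_total_cov[OF assms]
    by (simp add: scaleR_matrix_vector_assoc matrix_vector_mul_component row inner_diff_right algebra_simps)
qed

theorem theorem2:
  fixes h :: "'n::finite \<Rightarrow> 'c::finite \<Rightarrow> real^'p"
  assumes C2: "CARD('c) \<ge> 2"
    and NC1: "within_cov h = 0"
    and NC2_ne: "\<forall>c. class_mean h c \<noteq> global_mean h"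
    and NC2_eqnorm: "\<forall>c c'. norm (class_mean h c - global_mean h) = norm (class_mean h c' - global_mean h)"
    and NC2_simplex: "\<forall>c c'.
      ((1 / norm (class_mean h c - global_mean h)) *\<^sub>R (class_mean h c - global_mean h)) \<bullet>
      ((1 / norm (class_mean h c' - global_mean h)) *\<^sub>R (class_mean h c' - global_mean h))
      = real CARD('c) / (real CARD('c) - 1) * (if c = c' then 1 else 0) - 1 / (real CARD('c) - 1)"
  shows "(1 / frob_norm (WL_W h)) *\<^sub>R transpose (WL_W h) = (1 / frob_norm (Mdot h)) *\<^sub>R Mdot h
     \<and> (\<forall>x :: real^'p.
          {c. \<forall>c'. (WL_W h $ c') \<bullet> x + WL_b h $ c' \<le> (WL_W h $ c) \<bullet> x + WL_b h $ c}
        = {c. \<forall>c'. norm (x - class_mean h c) \<le> norm (x - class_mean h c')})"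
proof -
  let ?m = "\<lambda>c. class_mean h c - global_mean h"
  define r where "r = norm (?m undefined)"
  define \<alpha> where "\<alpha> = r\<^sup>2 * real CARD('c) / (real CARD('c) - 1)"
  have norm_m: "norm (?m c) = r" for c
    using NC2_eqnorm r_def by blast
  have "\<alpha> > 0"
    using NC2_ne C2 by (simp add: \<alpha>_def r_def)
  then have "\<alpha> \<noteq> 0"
    by simp
  have "column c (Mdot h) \<bullet> column c' (Mdot h) = (if c = c' then \<alpha> else 0) - r\<^sup>2 / (real CARD('c) - 1)"
    for c c'
    using inner_of_equinorm_simplex[of ?m, OF norm_m NC2_simplex[rule_format]] by (simp add: \<alpha>_def)
  then have frame: "transpose (Mdot h) ** Mdot h ** transpose (Mdot h) = \<alpha> *\<^sub>R transpose (Mdot h)"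
    using sum_centered_class_means by (intro transpose_mul_mul_transpose_of_simplex) auto
  note W = WL_W_of_collapse[OF NC1 frame \<open>\<alpha> \<noteq> 0\<close>]
    and score = WL_score_of_collapse[OF NC1 frame \<open>\<alpha> \<noteq> 0\<close>]
  have tW: "transpose (WL_W h) = (1 / \<alpha>) *\<^sub>R Mdot h"
    using W by (simp add: transpose_scalar)
  then have "frob_norm (WL_W h) = frob_norm ((1 / \<alpha>) *\<^sub>R Mdot h)"
    by (metis frob_norm_transpose)
  then have "(1 / frob_norm (WL_W h)) *\<^sub>R transpose (WL_W h) = (1 / frob_norm (Mdot h)) *\<^sub>R Mdot h"
    using tW frob_normalize_scaleR[of "1 / \<alpha>" "Mdot h"] \<open>\<alpha> > 0\<close> by simp
  moreover have "norm (x - class_mean h c) \<le> norm (x - class_mean h c')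
      \<longleftrightarrow> (WL_W h $ c') \<bullet> x + WL_b h $ c' \<le> (WL_W h $ c) \<bullet> x + WL_b h $ c" for x c c'
    using norm_diff_le_iff_inner_le[of "?m c" "?m c'" "x - global_mean h"] norm_m \<open>\<alpha> > 0\<close>
    by (simp add: score divide_le_cancel)
  ultimately show ?thesis
    by auto
qed

end
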